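(* In the slot formulation of the weighted balls-into-bins process, for every $0<a<\lambda/2$ and every $t\ge0$, $$\mathbb E\left[\Psi(x^s(t+1))-\Psi(x^s(t))\,\middle|\,x^s(t)\right]\le\sum_{i=1}^N\left(p_i\left(-a+Sa^2\right)+\left(\frac aN+S\frac{a^2}{N^2}\right)\right)e^{-a x^s_i(t)}.$$
   Context: Weighted balls into weighted bins: $n$ bins with positive integer weights $N_1,\dots,N_n$, $N=\sum_iN_i$; $\mathcal D$ on $[n]$ is $(\alpha,\beta)$-biased, i.e. $\frac{N_i}{\alpha N}\le\Pr_{\mathcal D}[i]\le\frac{\beta N_i}{N}$. Ball weights $w(t)$ are i.i.d. from $\mathcal W$ on $[0,\infty)$ with $\mathbb E[\mathcal W]=1$ and $M(z)=\mathbb E[e^{z\mathcal W}]$ finite at $z=\lambda$ for some $\lambda>0$; $S\ge1$ is a constant with $M''(z)\le2S$ for all $|z|<\lambda/2$. Each round two bins are sampled independently from $\mathcal D$ and the ball goes to the sampled bin with smaller value $v_i(t-1)=w_i(t-1)/N_i$. Slot formulation: bin $i$ consists of $N_i$ unit slots; the normalized slot vector $x^s(t)\in\mathbb R^N$ has, for each slot of bin $i$, the entry $v_i(t)-\frac1N\sum_{t'\le t}w(t')$, indexed so that $x^s_1(t)\ge\dots\ge x^s_N(t)$. Each round two slots are drawn independently (a slot of bin $i$ with probability $\Pr_{\mathcal D}[i]/N_i$), the one later in the sorted order is selected, and the ball's weight is spread evenly over its bin's slots; $p_i$ is the conditional probability, given $x^s(t)$, that the selected slot in round $t+1$ is the $i$-th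 in sorted order. $\Psi(y)=\sum_je^{-ay_j}$. *)

theory Defs
  imports "HOL-Probability.Probability"
begin

text \<open>Bins are 0,...,n-1 with positive integer weights Nw i; N = sum of Nw i.
  Loads L i = w_i(t) (total weight in bin i); bin value v_i = L i / Nw i.
  A sorted slot order is described by b :: nat => nat: the slot at sorted position
  k (0 <= k < N) belongs to bin b k.\<close>

definition total_weight :: "nat \<Rightarrow> (nat \<Rightarrow> nat) \<Rightarrow> nat" where
  "total_weight n Nw = (\<Sum>i<n. Nw i)"

definition biased :: "nat \<Rightarrow> (nat \<Rightarrow> nat) \<Rightarrow> real \<Rightarrow> real \<Rightarrow> nat pmf \<Rightarrow> bool" where
  "biased n Nw \<alpha> \<beta> D \<longleftrightarrow> set_pmf D \<subseteq> {..<n} \<and>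
     (\<forall>i<n. real (Nw i) / (\<alpha> * real (total_weight n Nw)) \<le> pmf D i \<and>
            pmf D i \<le> \<beta> * real (Nw i) / real (total_weight n Nw))"

text \<open>Normalized slot vector: entry at sorted position k is v_{b k} - (total ball weight)/N,
  where the total ball weight thrown so far equals the sum of all loads.\<close>
definition slot_vec :: "nat \<Rightarrow> (nat \<Rightarrow> nat) \<Rightarrow> (nat \<Rightarrow> nat) \<Rightarrow> (nat \<Rightarrow> real) \<Rightarrow> nat \<Rightarrow> real" where
  "slot_vec n Nw b L k = L (b k) / real (Nw (b k)) - (\<Sum>i<n. L i) / real (total_weight n Nw)"

definition is_sorted_slot_order :: "nat \<Rightarrow> (nat \<Rightarrow> nat) \<Rightarrow> (nat \<Rightarrow> nat) \<Rightarrow> (nat \<Rightarrow> real) \<Rightarrow> bool" where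
  "is_sorted_slot_order n Nw b L \<longleftrightarrow>
     (\<forall>k < total_weight n Nw. b k < n) \<and>
     (\<forall>i<n. card {k. k < total_weight n Nw \<and> b k = i} = Nw i) \<and>
     (\<forall>k k'. k \<le> k' \<longrightarrow> k' < total_weight n Nw \<longrightarrow> slot_vec n Nw b L k' \<le> slot_vec n Nw b L k)"

definition Psi :: "real \<Rightarrow> nat \<Rightarrow> (nat \<Rightarrow> real) \<Rightarrow> real" where
  "Psi a N y = (\<Sum>j<N. exp (- a * y j))"

text \<open>One slot draw: bin i from D, then a uniformly random slot of bin i
  (so a given slot of bin i has probability Pr_D[i]/N_i).\<close>
definition slot_draw :: "nat \<Rightarrow> (nat \<Rightarrow> nat) \<Rightarrow> (nat \<Rightarrow> nat) \<Rightarrow> nat pmf \<Rightarrow> nat pmf" where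
  "slot_draw n Nw b D = bind_pmf D (\<lambda>i. pmf_of_set {k. k < total_weight n Nw \<and> b k = i})"

text \<open>Two independent slot draws; the one later in sorted order is selected.\<close>
definition selected_slot :: "nat \<Rightarrow> (nat \<Rightarrow> nat) \<Rightarrow> (nat \<Rightarrow> nat) \<Rightarrow> nat pmf \<Rightarrow> nat pmf" where
  "selected_slot n Nw b D =
     map_pmf (\<lambda>(k1, k2). max k1 k2) (pair_pmf (slot_draw n Nw b D) (slot_draw n Nw b D))"

definition mgf :: "real measure \<Rightarrow> real \<Rightarrow> real" where
  "mgf W z = (\<integral>w. exp (z * w) \<partial>W)"

end

theory Submission
  imports Defs
begin

text \<open>Putting a ball of weight w into bin i moves every slot of bin i by w (1/N_i - 1/N) and
  every other slot by -w/N, so every term exp (-a x_j) of Psi is multiplied by exp (z_j w) with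
  |z_j| <= a. Averaging over the weight turns this factor into M(z_j), and Taylor's theorem for the
  moment generating function, differentiated under the integral sign (which the finiteness of
  M(lam) justifies), gives M(z) - 1 <= z + S z^2. The N_i slots of the receiving bin contribute
  -a + S a^2/N_i <= -a + S a^2 times the term of the selected slot, and every slot contributes at
  most a/N + S a^2/N^2 times its own term.\<close>

definition slot_shift :: "nat \<Rightarrow> (nat \<Rightarrow> nat) \<Rightarrow> (nat \<Rightarrow> nat) \<Rightarrow> nat \<Rightarrow> nat \<Rightarrow> real" where
  "slot_shift n Nw b i j = (if b j = i then 1 / real (Nw i) else 0) - 1 / real (total_weight n Nw)"

lemma slot_vec_add_ball:
  assumes "i < n"
  shows "slot_vec n Nw b (L(i := L i + w)) j = slot_vec n Nw b L j + w * slot_shift n Nw b i j"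
proof -
  have "L(i := L i + w) = (\<lambda>l. L l + (if l = i then w else 0))"
    by auto
  then have "(\<Sum>l<n. (L(i := L i + w)) l) = (\<Sum>l<n. L l) + w"
    using assms by (simp add: sum.distrib)
  then show ?thesis
    unfolding slot_vec_def slot_shift_def
    by (cases "b j = i") (simp_all add: add_divide_distrib algebra_simps)
qed

lemma Psi_slot_vec_add_ball:
  assumes "i < n"
  shows "Psi a N (slot_vec n Nw b (L(i := L i + w))) - Psi a N (slot_vec n Nw b L)
       = (\<Sum>j<N. exp (- a * slot_vec n Nw b L j) * (exp (- a * slot_shift n Nw b i j * w) - 1))"
proof -
  have "exp (- a * (x + w * s)) = exp (- a * x) * exp (- a * s * w)" for x s
    by (simp add: exp_add[symmetric] algebra_simps)
  then show ?thesis
    unfolding Psi_def slot_vec_add_ball[OF assms] by (simp add: sum_subtractf right_diff_distrib)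
qed

lemma abs_slot_shift_le_one:
  assumes "0 < Nw i" "0 < total_weight n Nw"
  shows "\<bar>slot_shift n Nw b i j\<bar> \<le> 1"
proof -
  define x where "x = (if b j = i then 1 / real (Nw i) else 0)"
  define y where "y = 1 / real (total_weight n Nw)"
  have "0 \<le> x" "x \<le> 1" "0 \<le> y" "y \<le> 1"
    using assms unfolding x_def y_def by simp_all
  then show ?thesis
    unfolding slot_shift_def x_def[symmetric] y_def[symmetric] abs_le_iff by linarith
qed

lemma sum_if_eq_card_mult:
  fixes c :: real and N :: nat
  shows "(\<Sum>j<N. if b j = i then c else 0) = card {j. j < N \<and> b j = i} * c"
proof -
  have "(\<Sum>j<N. if b j = i then c else 0) = (\<Sum>j\<in>{j \<in> {..<N}. b j = i}. c)"
    by (rule sum.inter_filter[where g = "\<lambda>_. c" and P = "\<lambda>j. b j = i", OF finite_lessThan, symmetric])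
  also have "{j \<in> {..<N}. b j = i} = {j. j < N \<and> b j = i}"
    by auto
  finally show ?thesis
    by simp
qed

lemma sum_slot_shift_quadratic_le:
  fixes E :: "nat \<Rightarrow> real" and a S :: real and n i :: nat and Nw b :: "nat \<Rightarrow> nat"
  defines "N \<equiv> total_weight n Nw"
    and "z \<equiv> \<lambda>j. - a * slot_shift n Nw b i j"
  assumes "0 \<le> S" "0 < Nw i" and card: "card {j. j < N \<and> b j = i} = Nw i" and "0 \<le> E i"
  shows "(\<Sum>j<N. E (b j) * (z j + S * (z j)\<^sup>2))
         \<le> (- a + S * a\<^sup>2) * E i + (\<Sum>j<N. (a / N + S * a\<^sup>2 / (real N)\<^sup>2) * E (b j))"
proof -
  define u where "u = 1 / real (Nw i)"
  define v where "v = 1 / real N"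
  define c where "c = a / N + S * a\<^sup>2 / (real N)\<^sup>2"
  define Q where "Q = - a * u + S * a\<^sup>2 * u\<^sup>2"
  have "0 \<le> u" "u \<le> 1" "0 \<le> v" "real (Nw i) * u = 1"
    using \<open>0 < Nw i\<close> unfolding u_def v_def by simp_all
  have c_eq: "c = a * v + S * a\<^sup>2 * v\<^sup>2"
    unfolding c_def v_def by (simp add: power2_eq_square)
  have pointwise: "E (b j) * (z j + S * (z j)\<^sup>2) \<le> c * E (b j) + (if b j = i then Q * E i else 0)" for j
  proof (cases "b j = i")
    case True
    then have zj: "z j = - a * (u - v)"
      unfolding z_def slot_shift_def u_def v_def N_def by simp
    have "z j + S * (z j)\<^sup>2 = - a * u + a * v + S * a\<^sup>2 * (u - v)\<^sup>2"
      unfolding zj by (simp add: power2_eq_square algebra_simps)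
    moreover have "(u - v)\<^sup>2 \<le> u\<^sup>2 + v\<^sup>2"
      using \<open>0 \<le> u\<close> \<open>0 \<le> v\<close> by (simp add: power2_diff)
    then have "S * a\<^sup>2 * (u - v)\<^sup>2 \<le> S * a\<^sup>2 * u\<^sup>2 + S * a\<^sup>2 * v\<^sup>2"
      using \<open>0 \<le> S\<close> by (simp add: mult_left_mono flip: distrib_left)
    ultimately have "z j + S * (z j)\<^sup>2 \<le> c + Q"
      unfolding c_eq Q_def by linarith
    then have "E i * (z j + S * (z j)\<^sup>2) \<le> E i * (c + Q)"
      using \<open>0 \<le> E i\<close> by (rule mult_left_mono)
    then show ?thesis
      using True by (simp add: algebra_simps)
  next
    case False
    then have zj: "z j = a * v"
      unfolding z_def slot_shift_def v_def N_def by simp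
    show ?thesis
      using False unfolding zj c_eq by (simp add: power_mult_distrib algebra_simps)
  qed
  have "real (Nw i) * Q = - a * (real (Nw i) * u) + S * a\<^sup>2 * u * (real (Nw i) * u)"
    unfolding Q_def by (simp add: power2_eq_square algebra_simps)
  then have bin_i: "real (Nw i) * Q = - a + S * a\<^sup>2 * u"
    using \<open>real (Nw i) * u = 1\<close> by simp
  have "(\<Sum>j<N. E (b j) * (z j + S * (z j)\<^sup>2))
      \<le> (\<Sum>j<N. c * E (b j)) + (\<Sum>j<N. if b j = i then Q * E i else 0)"
    unfolding sum.distrib[symmetric] by (intro sum_mono pointwise)
  also have "(\<Sum>j<N. if b j = i then Q * E i else 0) = (- a + S * a\<^sup>2 * u) * E i"
    unfolding sum_if_eq_card_mult card bin_i[symmetric] by simp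
  also have "\<dots> \<le> (- a + S * a\<^sup>2) * E i"
    using \<open>u \<le> 1\<close> \<open>0 \<le> S\<close> \<open>0 \<le> E i\<close> by (intro mult_right_mono) (auto intro: mult_left_le)
  finally show ?thesis
    unfolding c_def by linarith
qed

lemma set_pmf_selected_slot_subset:
  assumes "set_pmf D \<subseteq> {..<n}" "\<And>i. i < n \<Longrightarrow> 0 < Nw i"
    and "\<And>i. i < n \<Longrightarrow> card {k. k < total_weight n Nw \<and> b k = i} = Nw i"
  shows "set_pmf (selected_slot n Nw b D) \<subseteq> {..<total_weight n Nw}"
proof -
  have "set_pmf (slot_draw n Nw b D) \<subseteq> {..<total_weight n Nw}"
  proof
    fix k
    assume "k \<in> set_pmf (slot_draw n Nw b D)"
    then obtain i where "i \<in> set_pmf D" and k: "k \<in> set_pmf (pmf_of_set {k. k < total_weight n Nw \<and> b k = i})"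
      unfolding slot_draw_def by auto
    then have "i < n"
      using assms(1) by auto
    then have "{k. k < total_weight n Nw \<and> b k = i} \<noteq> {}"
      using assms(2,3) by (metis card.empty less_irrefl)
    then show "k \<in> {..<total_weight n Nw}"
      using k by simp
  qed
  then show ?thesis
    unfolding selected_slot_def by (auto simp: max_def)
qed

lemma integral_expectation_finite_pmf:
  fixes f :: "'a \<Rightarrow> 'b \<Rightarrow> real"
  assumes "finite A" "set_pmf p \<subseteq> A" "\<And>k. k \<in> A \<Longrightarrow> integrable M (f k)"
  shows "(\<integral>w. measure_pmf.expectation p (\<lambda>k. f k w) \<partial>M) = (\<Sum>k\<in>A. pmf p k * (\<integral>w. f k w \<partial>M))"
proof -
  have "measure_pmf.expectation p (\<lambda>k. f k w) = (\<Sum>k\<in>A. pmf p k * f k w)" for w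
    using integral_measure_pmf[OF assms(1), of p "\<lambda>k. f k w"] assms(2) by auto
  then show ?thesis
    using assms(3) by (simp add: integral_sum)
qed

lemma power_le_exp_mult:
  fixes w e :: real
  assumes "0 \<le> w" "0 < e"
  shows "w ^ m \<le> (real m / e) ^ m * exp (e * w)"
proof (cases "m = 0")
  case True
  then show ?thesis using assms by simp
next
  case False
  have "e * w / m \<le> exp (e * w / m)"
    using exp_ge_add_one_self[of "e * w / m"] by linarith
  then have "(e * w / m) ^ m \<le> exp (e * w / m) ^ m"
    using assms by (intro power_mono) auto
  also have "\<dots> = exp (e * w)"
    using False by (simp add: exp_of_nat_mult[symmetric])
  finally have bound: "(e * w / m) ^ m \<le> exp (e * w)" .
  have "w ^ m = (real m / e) ^ m * (e * w / m) ^ m"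
    using False assms by (simp add: power_mult_distrib[symmetric])
  also have "\<dots> \<le> (real m / e) ^ m * exp (e * w)"
    using bound assms by (intro mult_left_mono) auto
  finally show ?thesis .
qed

lemma abs_exp_sub_one_sub_le: "\<bar>exp x - 1 - x\<bar> \<le> x\<^sup>2 * exp \<bar>x::real\<bar>"
proof -
  obtain t where t: "\<bar>t\<bar> \<le> \<bar>x\<bar>" "exp x = (\<Sum>m<2. x ^ m / fact m) + exp t / fact 2 * x ^ 2"
    using Maclaurin_exp_le[of x 2] by blast
  have "exp t \<le> exp \<bar>x\<bar>"
    using t(1) by simp
  from t(2) have "\<bar>exp x - 1 - x\<bar> = exp t / 2 * x\<^sup>2"
    by (simp add: numeral_2_eq_2)
  also have "\<dots> \<le> exp \<bar>x\<bar> * x\<^sup>2"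
    using \<open>exp t \<le> exp \<bar>x\<bar>\<close> exp_gt_zero[of t] by (intro mult_right_mono) (linarith, simp)
  finally show ?thesis
    by (simp add: mult.commute)
qed

lemma has_field_derivative_quadratic_remainder:
  fixes f :: "real \<Rightarrow> real"
  assumes "0 < \<delta>"
    and remainder: "\<And>y. \<bar>y - z\<bar> < \<delta> \<Longrightarrow> \<bar>f y - f z - (y - z) * D\<bar> \<le> C * (y - z)\<^sup>2"
  shows "(f has_field_derivative D) (at z)"
proof -
  have "eventually (\<lambda>y. norm ((f y - f z) / (y - z) - D) \<le> \<bar>C\<bar> * \<bar>y - z\<bar>) (at z)"
  proof -
    have "norm ((f y - f z) / (y - z) - D) \<le> \<bar>C\<bar> * \<bar>y - z\<bar>"
      if "y \<noteq> z" "\<bar>y - z\<bar> < \<delta>" for y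
    proof -
      have "(f y - f z) / (y - z) - D = (f y - f z - (y - z) * D) / (y - z)"
        using that(1) by (simp add: diff_divide_distrib)
      then have "norm ((f y - f z) / (y - z) - D) = \<bar>f y - f z - (y - z) * D\<bar> / \<bar>y - z\<bar>"
        by (simp add: abs_divide)
      also have "\<dots> \<le> C * \<bar>y - z\<bar>\<^sup>2 / \<bar>y - z\<bar>"
        using remainder[OF that(2)] by (intro divide_right_mono) auto
      also have "\<dots> = C * \<bar>y - z\<bar>"
        using that(1) by (simp add: power2_eq_square del: power2_abs abs_mult_self_eq)
      also have "\<dots> \<le> \<bar>C\<bar> * \<bar>y - z\<bar>"
        by (intro mult_right_mono) auto
      finally show ?thesis .
    qed
    then show ?thesis
      using \<open>0 < \<delta>\<close> by (auto simp: eventually_at dist_real_def)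
  qed
  moreover have "((\<lambda>y. \<bar>C\<bar> * \<bar>y - z\<bar>) \<longlongrightarrow> 0) (at z)"
    by (intro tendsto_eq_intros) auto
  ultimately have "((\<lambda>y. (f y - f z) / (y - z) - D) \<longlongrightarrow> 0) (at z)"
    by (rule Lim_null_comparison)
  then show ?thesis
    by (simp add: has_field_derivative_iff LIM_zero_iff)
qed

definition exp_moment :: "real measure \<Rightarrow> nat \<Rightarrow> real \<Rightarrow> real" where
  "exp_moment W k z = (\<integral>w. w ^ k * exp (z * w) \<partial>W)"

lemma mgf_eq_exp_moment: "mgf W = exp_moment W 0"
  unfolding mgf_def exp_moment_def by (simp add: mult.commute)

context
  fixes W :: "real measure" and lam :: real
  assumes W_prob: "prob_space W" and W_borel: "sets W = sets borel"
    and W_nonneg: "AE w in W. 0 \<le> w"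
    and mgf_integrable: "integrable W (\<lambda>w. exp (lam * w))"
begin

lemma integrable_exp_moment:
  assumes "c < lam"
  shows "integrable W (\<lambda>w. w ^ k * exp (c * w))"
proof (rule Bochner_Integration.integrable_bound)
  define e where "e = lam - c"
  have "e > 0"
    using assms unfolding e_def by simp
  show "integrable W (\<lambda>w. (real k / e) ^ k * exp (lam * w))"
    using mgf_integrable by simp
  show "(\<lambda>w. w ^ k * exp (c * w)) \<in> borel_measurable W"
    by (subst measurable_cong_sets[OF W_borel refl]) measurable
  show "AE w in W. norm (w ^ k * exp (c * w)) \<le> norm ((real k / e) ^ k * exp (lam * w))"
    using W_nonneg
  proof eventually_elim
    case (elim w)
    have "norm (w ^ k * exp (c * w)) = w ^ k * exp (c * w)"
      using elim by simp
    also have "\<dots> \<le> (real k / e) ^ k * exp (e * w) * exp (c * w)"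
      using power_le_exp_mult[OF elim \<open>e > 0\<close>] by (intro mult_right_mono) auto
    also have "\<dots> = norm ((real k / e) ^ k * exp (lam * w))"
      using \<open>e > 0\<close> by (simp add: e_def mult.assoc exp_add[symmetric] algebra_simps)
    finally show ?case .
  qed
qed

lemma abs_exp_moment_remainder_le:
  assumes "z + \<bar>y - z\<bar> \<le> c" "c < lam"
  shows "\<bar>exp_moment W k y - exp_moment W k z - (y - z) * exp_moment W (Suc k) z\<bar>
         \<le> exp_moment W (k + 2) c * (y - z)\<^sup>2"
proof -
  define h where "h = y - z"
  define r where "r = (\<lambda>w. w ^ k * exp (z * w) * (exp (h * w) - 1 - h * w))"
  have "y < lam" "z < lam"
    using assms by linarith+
  then have integrable: "integrable W (\<lambda>w. w ^ m * exp (y * w))" "integrable W (\<lambda>w. w ^ m * exp (z * w))"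
      "integrable W (\<lambda>w. w ^ m * exp (c * w))" for m
    using assms(2) by (auto intro: integrable_exp_moment)
  have r_eq: "r = (\<lambda>w. w ^ k * exp (y * w) - w ^ k * exp (z * w) - h * (w ^ Suc k * exp (z * w)))"
    unfolding r_def h_def by (simp add: fun_eq_iff algebra_simps exp_add[symmetric])
  have "integrable W r"
    unfolding r_eq using integrable by (simp del: power_Suc)
  have "exp_moment W k y - exp_moment W k z - h * exp_moment W (Suc k) z = (\<integral>w. r w \<partial>W)"
    unfolding exp_moment_def r_eq using integrable by (simp add: integrable_diff del: power_Suc)
  moreover have "AE w in W. \<bar>r w\<bar> \<le> h\<^sup>2 * (w ^ (k + 2) * exp (c * w))"
    using W_nonneg
  proof eventually_elim
    case (elim w)
    have "\<bar>r w\<bar> \<le> w ^ k * exp (z * w) * ((h * w)\<^sup>2 * exp (\<bar>h\<bar> * w))"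
      unfolding r_def using elim abs_exp_sub_one_sub_le[of "h * w"]
      by (simp add: abs_mult mult_left_mono)
    also have "\<dots> = h\<^sup>2 * (w ^ (k + 2) * exp ((z + \<bar>h\<bar>) * w))"
      by (simp add: power_add power2_eq_square ring_distribs exp_add mult_ac)
    also have "\<dots> \<le> h\<^sup>2 * (w ^ (k + 2) * exp (c * w))"
      using assms(1) elim unfolding h_def by (intro mult_left_mono) (auto intro: mult_right_mono)
    finally show ?case .
  qed
  then have "(\<integral>w. \<bar>r w\<bar> \<partial>W) \<le> (\<integral>w. h\<^sup>2 * (w ^ (k + 2) * exp (c * w)) \<partial>W)"
    using \<open>integrable W r\<close> integrable(3)[of "k + 2"] by (intro integral_mono_AE) auto
  then have "\<bar>\<integral>w. r w \<partial>W\<bar> \<le> (\<integral>w. h\<^sup>2 * (w ^ (k + 2) * exp (c * w)) \<partial>W)"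
    using integral_norm_bound[of W r] unfolding real_norm_def by linarith
  ultimately show ?thesis
    unfolding h_def exp_moment_def by (simp add: mult.commute)
qed

lemma has_field_derivative_exp_moment:
  assumes "z < lam"
  shows "(exp_moment W k has_field_derivative exp_moment W (Suc k) z) (at z)"
proof (rule has_field_derivative_quadratic_remainder)
  show "0 < (lam - z) / 2"
    using assms by simp
  show "\<bar>exp_moment W k y - exp_moment W k z - (y - z) * exp_moment W (Suc k) z\<bar>
        \<le> exp_moment W (k + 2) ((z + lam) / 2) * (y - z)\<^sup>2" if "\<bar>y - z\<bar> < (lam - z) / 2" for y
    using that assms by (intro abs_exp_moment_remainder_le) auto
qed

lemma deriv_deriv_mgf:
  assumes "t < lam"
  shows "deriv (deriv (mgf W)) t = exp_moment W 2 t"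
proof -
  have deriv_mgf: "exp_moment W 1 u = deriv (mgf W) u" if "u < lam" for u
    unfolding mgf_eq_exp_moment
    using has_field_derivative_exp_moment[OF that, of 0] by (simp add: DERIV_imp_deriv)
  have "(exp_moment W 1 has_field_derivative exp_moment W 2 t) (at t)"
    using has_field_derivative_exp_moment[OF assms, of 1] by (simp add: numeral_2_eq_2)
  then have "(deriv (mgf W) has_field_derivative exp_moment W 2 t) (at t)"
    by (rule has_field_derivative_transform_within_open[where S = "{..<lam}"])
      (use assms deriv_mgf in auto)
  then show ?thesis
    by (rule DERIV_imp_deriv)
qed

lemma mgf_le_quadratic:
  assumes mean: "(\<integral>w. w \<partial>W) = 1" and "\<bar>x\<bar> < lam"
    and second: "\<And>t. \<bar>t\<bar> \<le> \<bar>x\<bar> \<Longrightarrow> deriv (deriv (mgf W)) t \<le> 2 * S"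
  shows "mgf W x \<le> 1 + x + S * x\<^sup>2"
proof (cases "x = 0")
  case True
  then show ?thesis
    using prob_space.prob_space[OF W_prob] by (simp add: mgf_def)
next
  case False
  have derivs: "\<forall>m t. m < 2 \<and> - \<bar>x\<bar> \<le> t \<and> t \<le> \<bar>x\<bar> \<longrightarrow>
      DERIV (exp_moment W m) t :> exp_moment W (Suc m) t"
    using assms(2) by (auto intro!: has_field_derivative_exp_moment)
  have "\<exists>t. (if x < 0 then x < t \<and> t < 0 else 0 < t \<and> t < x) \<and> exp_moment W 0 x
       = (\<Sum>m<2. exp_moment W m 0 / fact m * (x - 0) ^ m) + exp_moment W 2 t / fact 2 * (x - 0) ^ 2"
    using False by (intro Taylor[OF _ refl derivs]) auto
  then obtain t where t_between: "if x < 0 then x < t \<and> t < 0 else 0 < t \<and> t < x"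
    and taylor: "exp_moment W 0 x
       = (\<Sum>m<2. exp_moment W m 0 / fact m * (x - 0) ^ m) + exp_moment W 2 t / fact 2 * (x - 0) ^ 2"
    by blast
  have t: "\<bar>t\<bar> \<le> \<bar>x\<bar>"
    using t_between by (auto split: if_splits)
  have "exp_moment W 0 0 = 1" "exp_moment W 1 0 = 1"
    using prob_space.prob_space[OF W_prob] mean by (simp_all add: exp_moment_def)
  then have "mgf W x = 1 + x + exp_moment W 2 t / 2 * x\<^sup>2"
    using taylor by (simp add: mgf_eq_exp_moment numeral_2_eq_2)
  moreover have "exp_moment W 2 t / 2 * x\<^sup>2 \<le> S * x\<^sup>2"
    using second[OF t] deriv_deriv_mgf[of t] t assms(2) by (intro mult_right_mono) auto
  ultimately show ?thesis
    by linarith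
qed

lemma has_bochner_integral_Psi_add_ball:
  fixes n :: nat and Nw :: "nat \<Rightarrow> nat"
  defines "N \<equiv> total_weight n Nw"
  assumes "i < n" "0 < Nw i" "0 < N" "\<bar>a\<bar> < lam"
  shows "has_bochner_integral W
           (\<lambda>w. Psi a N (slot_vec n Nw b (L(i := L i + w))) - Psi a N (slot_vec n Nw b L))
           (\<Sum>j<N. exp (- a * slot_vec n Nw b L j) * (mgf W (- a * slot_shift n Nw b i j) - 1))"
proof -
  have exp_integral: "has_bochner_integral W (\<lambda>w. exp (z * w) - 1) (mgf W z - 1)" if "z < lam" for z
  proof -
    have "integrable W (\<lambda>w. exp (z * w))"
      using integrable_exp_moment[OF that, of 0] by simp
    moreover have "integrable W (\<lambda>w. 1 :: real)"
      using W_prob by (simp add: prob_space.finite_measure finite_measure.integrable_const)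
    ultimately show ?thesis
      using prob_space.prob_space[OF W_prob]
      by (simp add: has_bochner_integral_iff mgf_def mult.commute)
  qed
  have shift_lt: "- a * slot_shift n Nw b i j < lam" for j
  proof -
    have "\<bar>- a * slot_shift n Nw b i j\<bar> \<le> \<bar>a\<bar>"
      using abs_slot_shift_le_one[of Nw i n b j] assms by (simp add: abs_mult mult_left_le)
    then show ?thesis
      using assms by linarith
  qed
  show ?thesis
    unfolding Psi_slot_vec_add_ball[OF \<open>i < n\<close>]
    by (intro has_bochner_integral_sum has_bochner_integral_mult_right exp_integral shift_lt)
qed

lemma integrable_Psi_add_ball:
  fixes n :: nat and Nw :: "nat \<Rightarrow> nat"
  defines "N \<equiv> total_weight n Nw"
  assumes "i < n" "0 < Nw i" "0 < N" "\<bar>a\<bar> < lam"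
  shows "integrable W (\<lambda>w. Psi a N (slot_vec n Nw b (L(i := L i + w))) - Psi a N (slot_vec n Nw b L))"
  using has_bochner_integral_Psi_add_ball[of i n Nw a b L] assms unfolding N_def
  by (blast intro: integrable.intros)

lemma integral_Psi_add_ball_le:
  fixes n :: nat and Nw :: "nat \<Rightarrow> nat"
  defines "N \<equiv> total_weight n Nw"
  assumes mean: "(\<integral>w. w \<partial>W) = 1" and "\<bar>a\<bar> < lam" and "0 \<le> S"
    and second: "\<And>t. \<bar>t\<bar> \<le> \<bar>a\<bar> \<Longrightarrow> deriv (deriv (mgf W)) t \<le> 2 * S"
    and "k < N" "b k < n" "0 < Nw (b k)" and card: "card {j. j < N \<and> b j = b k} = Nw (b k)"
  shows "(\<integral>w. Psi a N (slot_vec n Nw b (L(b k := L (b k) + w))) - Psi a N (slot_vec n Nw b L) \<partial>W)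
         \<le> (- a + S * a\<^sup>2) * exp (- a * slot_vec n Nw b L k)
           + (\<Sum>j<N. (a / N + S * a\<^sup>2 / (real N)\<^sup>2) * exp (- a * slot_vec n Nw b L j))"
proof -
  define z where "z j = - a * slot_shift n Nw b (b k) j" for j
  define E where "E l = exp (- a * (L l / real (Nw l) - (\<Sum>i<n. L i) / real N))" for l
  have slot_E: "exp (- a * slot_vec n Nw b L j) = E (b j)" for j
    unfolding E_def slot_vec_def N_def ..
  have z_le: "\<bar>z j\<bar> \<le> \<bar>a\<bar>" for j
    using abs_slot_shift_le_one[of Nw "b k" n b j] \<open>k < N\<close> \<open>0 < Nw (b k)\<close>
    unfolding z_def N_def by (simp add: abs_mult mult_left_le)
  have mgf_z: "mgf W (z j) - 1 \<le> z j + S * (z j)\<^sup>2" for j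
  proof -
    have "mgf W (z j) \<le> 1 + z j + S * (z j)\<^sup>2"
    proof (rule mgf_le_quadratic[OF mean])
      show "\<bar>z j\<bar> < lam"
        using z_le[of j] \<open>\<bar>a\<bar> < lam\<close> by linarith
      show "deriv (deriv (mgf W)) t \<le> 2 * S" if "\<bar>t\<bar> \<le> \<bar>z j\<bar>" for t
        using that z_le[of j] by (intro second) linarith
    qed
    then show ?thesis
      by linarith
  qed
  have "(\<integral>w. Psi a N (slot_vec n Nw b (L(b k := L (b k) + w))) - Psi a N (slot_vec n Nw b L) \<partial>W)
      = (\<Sum>j<N. E (b j) * (mgf W (z j) - 1))"
    using has_bochner_integral_Psi_add_ball[of "b k" n Nw a b L, folded N_def] assms
    unfolding slot_E z_def by (intro has_bochner_integral_integral_eq) auto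
  also have "\<dots> \<le> (\<Sum>j<N. E (b j) * (z j + S * (z j)\<^sup>2))"
    by (intro sum_mono mult_left_mono mgf_z) (simp add: E_def)
  also have "\<dots> \<le> (- a + S * a\<^sup>2) * E (b k) + (\<Sum>j<N. (a / N + S * a\<^sup>2 / (real N)\<^sup>2) * E (b j))"
    unfolding z_def N_def using assms by (intro sum_slot_shift_quadratic_le) (auto simp: E_def)
  finally show ?thesis
    unfolding slot_E .
qed

end

theorem mainTheorem9:
  fixes n :: nat and Nw :: "nat \<Rightarrow> nat" and D :: "nat pmf" and \<alpha> \<beta> :: real
    and W :: "real measure" and lam S a :: real
    and L :: "nat \<Rightarrow> real" and b :: "nat \<Rightarrow> nat"
  defines "N \<equiv> total_weight n Nw"
  assumes Nw_pos: "\<forall>i<n. Nw i > 0"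
    and D_biased: "biased n Nw \<alpha> \<beta> D"
    and W_prob: "prob_space W" and W_borel: "sets W = sets borel"
    and W_nonneg: "AE w in W. 0 \<le> w"
    and W_mean: "integrable W (\<lambda>w. w)" "(\<integral>w. w \<partial>W) = 1"
    and lam_pos: "lam > 0" and mgf_fin: "integrable W (\<lambda>w. exp (lam * w))"
    and S_ge: "S \<ge> 1"
    and S_bound: "\<forall>z. \<bar>z\<bar> < lam / 2 \<longrightarrow> deriv (deriv (mgf W)) z \<le> 2 * S"
    and a_pos: "0 < a" and a_lt: "a < lam / 2"
    and L_nonneg: "\<forall>i<n. L i \<ge> 0"
    and sorted: "is_sorted_slot_order n Nw b L"
  shows "(\<integral>w. measure_pmf.expectation (selected_slot n Nw b D)
            (\<lambda>k. Psi a N (slot_vec n Nw b (L(b k := L (b k) + w)))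
                 - Psi a N (slot_vec n Nw b L)) \<partial>W)
         \<le> (\<Sum>i<N. (pmf (selected_slot n Nw b D) i * (- a + S * a\<^sup>2)
                     + (a / real N + S * a\<^sup>2 / (real N)\<^sup>2))
                   * exp (- a * slot_vec n Nw b L i))"
proof -
  define p where "p = selected_slot n Nw b D"
  define \<Delta> where "\<Delta> k w = Psi a N (slot_vec n Nw b (L(b k := L (b k) + w))) - Psi a N (slot_vec n Nw b L)"
    for k w
  define e where "e j = exp (- a * slot_vec n Nw b L j)" for j
  define c where "c = a / real N + S * a\<^sup>2 / (real N)\<^sup>2"
  have bins: "b k < n" "0 < Nw (b k)" "card {j. j < N \<and> b j = b k} = Nw (b k)" if "k < N" for k
    using sorted Nw_pos that unfolding is_sorted_slot_order_def N_def by auto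
  have p_support: "set_pmf p \<subseteq> {..<N}"
    using D_biased sorted Nw_pos unfolding p_def N_def biased_def is_sorted_slot_order_def
    by (intro set_pmf_selected_slot_subset) auto
  note W_facts = W_prob W_borel W_nonneg mgf_fin
  have a_lt_lam: "\<bar>a\<bar> < lam" and second: "\<And>t. \<bar>t\<bar> \<le> \<bar>a\<bar> \<Longrightarrow> deriv (deriv (mgf W)) t \<le> 2 * S"
    using a_pos a_lt S_bound by auto
  have "(\<integral>w. measure_pmf.expectation p (\<lambda>k. \<Delta> k w) \<partial>W) = (\<Sum>k<N. pmf p k * (\<integral>w. \<Delta> k w \<partial>W))"
    using integrable_Psi_add_ball[OF W_facts, of _ n Nw a b L, folded N_def] bins a_lt_lam p_support
    unfolding \<Delta>_def by (intro integral_expectation_finite_pmf) auto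
  also have "\<dots> \<le> (\<Sum>k<N. pmf p k * ((- a + S * a\<^sup>2) * e k + (\<Sum>j<N. c * e j)))"
    unfolding \<Delta>_def e_def c_def N_def
    using integral_Psi_add_ball_le[OF W_facts W_mean(2) a_lt_lam _ second] bins S_ge
    by (intro sum_mono mult_left_mono) (auto simp: N_def)
  also have "\<dots> = (\<Sum>k<N. (pmf p k * (- a + S * a\<^sup>2) + c) * e k)"
    using sum_pmf_eq_1[OF finite_lessThan p_support]
    by (simp add: distrib_left distrib_right sum.distrib mult_ac flip: sum_distrib_left sum_distrib_right)
  finally show ?thesis
    unfolding p_def \<Delta>_def e_def c_def .
qed

end
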